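(* For each $n\ge 5$ there exists a packing of $n$ squares whose radii form an algebraically independent set and which has more than $2n-2$ contacts.
   Context: Let $S=\{(x,y): -1\le x,y\le 1\}$ and for $\theta\in[0,\pi/2)$ let $R_\theta$ be the matrix of anticlockwise rotation by $\theta$. A similar copy of $S$ is a set $rR_\theta S+p$ with $r>0$, $p\in\mathbb{R}^2$, $\theta\in[0,\pi/2)$. A packing of $n$ squares is a set $\{S_1,\ldots,S_n\}$ of similar copies $S_i=r_iR_{\theta_i}S+p_i$ of $S$ whose interiors are pairwise disjoint; $r_1,\ldots,r_n$ are its radii. A contact is an unordered pair $\{i,j\}$, $i\ne j$, with $S_i\cap S_j\ne\emptyset$. *)

theory Defs
  imports "HOL-Analysis.Analysis"
begin

definition std_square :: "(real \<times> real) set" where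
  "std_square = {(x, y). -1 \<le> x \<and> x \<le> 1 \<and> -1 \<le> y \<and> y \<le> 1}"

definition rot :: "real \<Rightarrow> real \<times> real \<Rightarrow> real \<times> real" where
  "rot t v = (cos t * fst v - sin t * snd v, sin t * fst v + cos t * snd v)"

definition sim_copy :: "real \<Rightarrow> real \<Rightarrow> real \<times> real \<Rightarrow> (real \<times> real) set" where
  "sim_copy r t p = (\<lambda>v. r *\<^sub>R rot t v + p) ` std_square"

definition is_packing :: "nat \<Rightarrow> (nat \<Rightarrow> real) \<Rightarrow> (nat \<Rightarrow> real) \<Rightarrow> (nat \<Rightarrow> real \<times> real) \<Rightarrow> bool" where
  "is_packing n r t p \<longleftrightarrow>
     (\<forall>i<n. 0 < r i \<and> 0 \<le> t i \<and> t i < pi / 2) \<and>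
     (\<forall>i<n. \<forall>j<n. i \<noteq> j \<longrightarrow>
        interior (sim_copy (r i) (t i) (p i)) \<inter> interior (sim_copy (r j) (t j) (p j)) = {})"

definition contacts :: "nat \<Rightarrow> (nat \<Rightarrow> real) \<Rightarrow> (nat \<Rightarrow> real) \<Rightarrow> (nat \<Rightarrow> real \<times> real) \<Rightarrow> (nat \<times> nat) set" where
  "contacts n r t p = {(i, j). i < j \<and> j < n \<and>
       sim_copy (r i) (t i) (p i) \<inter> sim_copy (r j) (t j) (p j) \<noteq> {}}"

text \<open>A polynomial
  is given by a finite set M of exponent vectors (supported in {0..<n}) and rational
  coefficients c.\<close>
definition alg_indep :: "nat \<Rightarrow> (nat \<Rightarrow> real) \<Rightarrow> bool" where
  "alg_indep n r \<longleftrightarrow>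
     (\<forall>(M :: (nat \<Rightarrow> nat) set) (c :: (nat \<Rightarrow> nat) \<Rightarrow> real).
        finite M \<longrightarrow> (\<forall>\<alpha>\<in>M. c \<alpha> \<in> \<rat>) \<longrightarrow> (\<forall>\<alpha>\<in>M. \<forall>i\<ge>n. \<alpha> i = 0) \<longrightarrow>
        (\<Sum>\<alpha>\<in>M. c \<alpha> * (\<Prod>i<n. r i ^ \<alpha> i)) = 0 \<longrightarrow> (\<forall>\<alpha>\<in>M. c \<alpha> = 0))"

end

(*
  Radii can be chosen one at a time: Q[r_0, ..., r_(k-1)] is countable, hence so is the set of
  reals that are roots of nonzero polynomials over it, so every open interval contains an r_k
  outside that set, and then r_0, ..., r_k are again algebraically independent.  Hence each
  radius may be prescribed up to an open interval, and it suffices to give a configuration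
  that survives small independent perturbations of the radii.

  Take a large square 0 = [-2 r_0, 0]^2, squares 2 = [0, 2 r_2]^2 and 3 = [-2 r_3, 0] x [0, 2 r_3]
  with r_2 > 2 r_3, and squares 4, 5, ..., n-1 stacked downwards from the origin along the edge
  x = 0 of square 0.  Square 1 is tilted so that its bottom edge runs through the top-left
  corners of squares 3 and 2, and it is moved along that line until its lowest vertex lies on
  the top edge of square 0.  Every square touches square 0 and consecutive squares 1-2, 2-3,
  3-4, 4-5, ... touch, giving 2n - 3 contacts; the pairs 1-3 and 2-4 give two more.
*)
theory Submission
  imports Defs "HOL-Computational_Algebra.Polynomial"
begin

section \<open>Algebraically independent radii in prescribed intervals\<close>

datatype rat_expr = Const rat | Var nat | Add rat_expr rat_expr | Mul rat_expr rat_expr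

instance rat_expr :: countable by countable_datatype

fun eval_rat_expr :: "(nat \<Rightarrow> real) \<Rightarrow> rat_expr \<Rightarrow> real" where
  "eval_rat_expr r (Const q) = of_rat q"
| "eval_rat_expr r (Var i) = r i"
| "eval_rat_expr r (Add e f) = eval_rat_expr r e + eval_rat_expr r f"
| "eval_rat_expr r (Mul e f) = eval_rat_expr r e * eval_rat_expr r f"

definition rat_poly_values :: "(nat \<Rightarrow> real) \<Rightarrow> real set" where
  "rat_poly_values r = range (eval_rat_expr r)"

lemma countable_rat_poly_values: "countable (rat_poly_values r)"
  unfolding rat_poly_values_def by simp

lemma rat_poly_values_Rats: "q \<in> \<rat> \<Longrightarrow> q \<in> rat_poly_values r"
  unfolding rat_poly_values_def by (metis Rats_cases eval_rat_expr.simps(1) rangeI)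

lemma rat_poly_values_var: "r i \<in> rat_poly_values r"
  unfolding rat_poly_values_def by (metis eval_rat_expr.simps(2) rangeI)

lemma rat_poly_values_add:
  "x \<in> rat_poly_values r \<Longrightarrow> y \<in> rat_poly_values r \<Longrightarrow> x + y \<in> rat_poly_values r"
proof -
  assume "x \<in> rat_poly_values r" "y \<in> rat_poly_values r"
  then obtain e f where "x = eval_rat_expr r e" "y = eval_rat_expr r f"
    unfolding rat_poly_values_def by blast
  then have "x + y = eval_rat_expr r (Add e f)" by simp
  then show ?thesis unfolding rat_poly_values_def by blast
qed

lemma rat_poly_values_mult:
  "x \<in> rat_poly_values r \<Longrightarrow> y \<in> rat_poly_values r \<Longrightarrow> x * y \<in> rat_poly_values r"
proof -
  assume "x \<in> rat_poly_values r" "y \<in> rat_poly_values r"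
  then obtain e f where "x = eval_rat_expr r e" "y = eval_rat_expr r f"
    unfolding rat_poly_values_def by blast
  then have "x * y = eval_rat_expr r (Mul e f)" by simp
  then show ?thesis unfolding rat_poly_values_def by blast
qed

lemma rat_poly_values_sum:
  "(\<And>i. i \<in> A \<Longrightarrow> f i \<in> rat_poly_values r) \<Longrightarrow> sum f A \<in> rat_poly_values r"
  by (induction A rule: infinite_finite_induct) (auto intro: rat_poly_values_add rat_poly_values_Rats)

lemma rat_poly_values_prod:
  "(\<And>i. i \<in> A \<Longrightarrow> f i \<in> rat_poly_values r) \<Longrightarrow> prod f A \<in> rat_poly_values r"
  by (induction A rule: infinite_finite_induct) (auto intro: rat_poly_values_mult rat_poly_values_Rats)

lemma rat_poly_values_power: "x \<in> rat_poly_values r \<Longrightarrow> x ^ k \<in> rat_poly_values r"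
  by (induction k) (auto intro: rat_poly_values_mult rat_poly_values_Rats)

lemma rat_poly_values_monomial_sum:
  "(\<forall>\<alpha>\<in>M. c \<alpha> \<in> \<rat>) \<Longrightarrow> (\<Sum>\<alpha>\<in>M. c \<alpha> * (\<Prod>i<k. r i ^ \<alpha> i)) \<in> rat_poly_values r"
  by (intro rat_poly_values_sum rat_poly_values_mult rat_poly_values_prod rat_poly_values_power
      rat_poly_values_var) (auto intro: rat_poly_values_Rats)

lemma countable_roots_with_coeffs_in:
  fixes R :: "'a::idom set"
  assumes "countable R"
  shows "countable {z. \<exists>P. P \<noteq> 0 \<and> (\<forall>j. coeff P j \<in> R) \<and> poly P z = 0}"
proof -
  let ?polys = "{P. P \<noteq> 0 \<and> (\<forall>j. coeff P j \<in> R)}"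
  have "?polys \<subseteq> Poly ` lists R"
  proof
    fix P assume "P \<in> ?polys"
    then have "coeffs P \<in> lists R"
      by (auto simp: coeffs_def)
    then show "P \<in> Poly ` lists R" by (metis Poly_coeffs image_eqI)
  qed
  then have "countable ?polys"
    using assms by (meson countable_image countable_lists countable_subset)
  moreover have "countable {z. poly P z = 0}" if "P \<in> ?polys" for P
    using that poly_roots_finite[of P] by (simp add: countable_finite)
  ultimately have "countable (\<Union>P\<in>?polys. {z. poly P z = 0})"
    by (rule countable_UN)
  moreover have "{z. \<exists>P. P \<noteq> 0 \<and> (\<forall>j. coeff P j \<in> R) \<and> poly P z = 0} = (\<Union>P\<in>?polys. {z. poly P z = 0})"
    by blast
  ultimately show ?thesis by simp
qed

lemma alg_indepD:
  assumes "alg_indep n r" "finite M" "\<forall>\<alpha>\<in>M. c \<alpha> \<in> \<rat>" "\<forall>\<alpha>\<in>M. \<forall>i\<ge>n. \<alpha> i = 0"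
    "(\<Sum>\<alpha>\<in>M. c \<alpha> * (\<Prod>i<n. r i ^ \<alpha> i)) = 0" "\<alpha> \<in> M"
  shows "c \<alpha> = 0"
  using assms unfolding alg_indep_def by blast

lemma alg_indep_fiber:
  assumes indep: "alg_indep k r" and "finite M" and rat: "\<forall>\<alpha>\<in>M. c \<alpha> \<in> \<rat>"
    and supp: "\<forall>\<alpha>\<in>M. \<forall>i>k. \<alpha> i = 0" and fiber: "\<forall>\<alpha>\<in>M. \<alpha> k = j"
    and zero: "(\<Sum>\<alpha>\<in>M. c \<alpha> * (\<Prod>i<k. r i ^ \<alpha> i)) = 0"
  shows "\<forall>\<alpha>\<in>M. c \<alpha> = 0"
proof -
  define h where "h \<alpha> = \<alpha>(k := 0)" for \<alpha> :: "nat \<Rightarrow> nat"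
  define c' where "c' \<beta> = c (\<beta>(k := j))" for \<beta> :: "nat \<Rightarrow> nat"
  have h_inverse: "(h \<alpha>)(k := j) = \<alpha>" if "\<alpha> \<in> M" for \<alpha>
    using that fiber by (auto simp: h_def)
  then have "inj_on h M" by (metis inj_onI)
  have rat': "\<forall>\<beta>\<in>h ` M. c' \<beta> \<in> \<rat>"
    using rat h_inverse by (auto simp: c'_def)
  have supp': "\<forall>\<beta>\<in>h ` M. \<forall>i\<ge>k. \<beta> i = 0"
    using supp by (auto simp: h_def nat_less_le)
  have "(\<Prod>i<k. r i ^ h \<alpha> i) = (\<Prod>i<k. r i ^ \<alpha> i)" for \<alpha>
    by (intro prod.cong) (auto simp: h_def)
  then have "(\<Sum>\<beta>\<in>h ` M. c' \<beta> * (\<Prod>i<k. r i ^ \<beta> i)) = (\<Sum>\<alpha>\<in>M. c \<alpha> * (\<Prod>i<k. r i ^ \<alpha> i))"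
    using \<open>inj_on h M\<close> h_inverse by (simp add: sum.reindex c'_def)
  also have "\<dots> = 0" by (fact zero)
  finally have zero': "(\<Sum>\<beta>\<in>h ` M. c' \<beta> * (\<Prod>i<k. r i ^ \<beta> i)) = 0" .
  have "c' (h \<alpha>) = 0" if "\<alpha> \<in> M" for \<alpha>
    by (rule alg_indepD[OF indep finite_imageI[OF \<open>finite M\<close>] rat' supp' zero' imageI[OF that]])
  then show ?thesis using h_inverse unfolding c'_def by metis
qed

lemma alg_indep_Suc:
  assumes indep: "alg_indep k r"
    and transcendental: "\<And>P. P \<noteq> 0 \<Longrightarrow> \<forall>j. coeff P j \<in> rat_poly_values r \<Longrightarrow> poly P x \<noteq> 0"
  shows "alg_indep (Suc k) (r(k := x))"
  unfolding alg_indep_def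
proof (intro allI impI)
  fix M :: "(nat \<Rightarrow> nat) set" and c :: "(nat \<Rightarrow> nat) \<Rightarrow> real"
  assume fin: "finite M" and rat: "\<forall>\<alpha>\<in>M. c \<alpha> \<in> \<rat>" and supp: "\<forall>\<alpha>\<in>M. \<forall>i\<ge>Suc k. \<alpha> i = 0"
    and zero: "(\<Sum>\<alpha>\<in>M. c \<alpha> * (\<Prod>i<Suc k. (r(k := x)) i ^ \<alpha> i)) = 0"
  define m where "m \<alpha> = (\<Prod>i<k. r i ^ \<alpha> i)" for \<alpha> :: "nat \<Rightarrow> nat"
  define P where "P = (\<Sum>\<alpha>\<in>M. monom (c \<alpha> * m \<alpha>) (\<alpha> k))"
  have "(\<Prod>i<k. (r(k := x)) i ^ \<alpha> i) = m \<alpha>" for \<alpha>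
    unfolding m_def by (intro prod.cong) auto
  then have "poly P x = 0"
    using zero by (simp add: P_def poly_sum poly_monom lessThan_Suc mult_ac)
  moreover have coeff_P: "coeff P j = (\<Sum>\<alpha>\<in>{\<alpha>\<in>M. \<alpha> k = j}. c \<alpha> * m \<alpha>)" for j
    using fin by (simp add: P_def coeff_sum coeff_monom sum.inter_filter)
  moreover have "coeff P j \<in> rat_poly_values r" for j
    unfolding coeff_P m_def using rat by (intro rat_poly_values_monomial_sum) auto
  ultimately have "P = 0"
    using transcendental by blast
  show "\<forall>\<alpha>\<in>M. c \<alpha> = 0"
  proof
    fix \<alpha> assume "\<alpha> \<in> M"
    have "\<forall>\<beta>\<in>{\<beta>\<in>M. \<beta> k = \<alpha> k}. c \<beta> = 0"
    proof (rule alg_indep_fiber[OF indep])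
      show "(\<Sum>\<beta>\<in>{\<beta>\<in>M. \<beta> k = \<alpha> k}. c \<beta> * (\<Prod>i<k. r i ^ \<beta> i)) = 0"
        using \<open>P = 0\<close> coeff_P[of "\<alpha> k"] by (simp add: m_def)
    qed (use fin rat supp in \<open>auto simp: Suc_le_eq\<close>)
    then show "c \<alpha> = 0" using \<open>\<alpha> \<in> M\<close> by blast
  qed
qed

lemma alg_indep_0: "alg_indep 0 r"
  unfolding alg_indep_def
proof (intro allI impI)
  fix M :: "(nat \<Rightarrow> nat) set" and c :: "(nat \<Rightarrow> nat) \<Rightarrow> real"
  assume "\<forall>\<alpha>\<in>M. \<forall>i\<ge>0. \<alpha> i = 0" and zero: "(\<Sum>\<alpha>\<in>M. c \<alpha> * (\<Prod>i<0. r i ^ \<alpha> i)) = 0"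
  then have "M \<subseteq> {\<lambda>_. 0}" by auto
  then consider "M = {}" | "M = {\<lambda>_. 0}" by blast
  then show "\<forall>\<alpha>\<in>M. c \<alpha> = 0" using zero by cases auto
qed

lemma alg_indep_in_intervals:
  assumes "\<forall>i<n. lo i < hi i"
  shows "\<exists>r. (\<forall>i<n. lo i < r i \<and> r i < hi i) \<and> alg_indep n r"
  using assms
proof (induction n)
  case 0
  then show ?case using alg_indep_0 by blast
next
  case (Suc n)
  then obtain r where r: "\<forall>i<n. lo i < r i \<and> r i < hi i" "alg_indep n r" by auto
  let ?roots = "{z. \<exists>P. P \<noteq> 0 \<and> (\<forall>j. coeff P j \<in> rat_poly_values r) \<and> poly P z = 0}"
  have "uncountable {lo n<..<hi n}" using Suc.prems by (simp add: uncountable_open_interval)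
  moreover have "countable ?roots"
    by (rule countable_roots_with_coeffs_in[OF countable_rat_poly_values])
  ultimately have "\<not> {lo n<..<hi n} \<subseteq> ?roots"
    using countable_subset by blast
  then obtain x where x: "x \<in> {lo n<..<hi n}" "x \<notin> ?roots"
    by blast
  have "alg_indep (Suc n) (r(n := x))"
    using x(2) by (intro alg_indep_Suc[OF r(2)]) auto
  moreover have "\<forall>i<Suc n. lo i < (r(n := x)) i \<and> (r(n := x)) i < hi i"
    using r(1) x(1) by (auto simp: less_Suc_eq)
  ultimately show ?case by blast
qed

section \<open>Squares and separating half-planes\<close>

lemma sim_copy_rot0:
  assumes "0 < r"
  shows "sim_copy r 0 (p1, p2) = {p1 - r..p1 + r} \<times> {p2 - r..p2 + r}"
proof
  have "\<bar>r * a\<bar> \<le> r" if "\<bar>a\<bar> \<le> 1" for a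
    using assms that by (simp add: abs_mult mult_left_le)
  then show "sim_copy r 0 (p1, p2) \<subseteq> {p1 - r..p1 + r} \<times> {p2 - r..p2 + r}"
    by (fastforce simp: sim_copy_def rot_def std_square_def abs_le_iff)
next
  show "{p1 - r..p1 + r} \<times> {p2 - r..p2 + r} \<subseteq> sim_copy r 0 (p1, p2)"
  proof
    fix z assume z: "z \<in> {p1 - r..p1 + r} \<times> {p2 - r..p2 + r}"
    let ?v = "((fst z - p1) / r, (snd z - p2) / r)"
    have "?v \<in> std_square"
      using z assms by (auto simp: std_square_def divide_le_eq le_divide_eq)
    moreover have "z = r *\<^sub>R rot 0 ?v + (p1, p2)"
      using assms by (simp add: rot_def prod_eq_iff)
    ultimately show "z \<in> sim_copy r 0 (p1, p2)"
      unfolding sim_copy_def by blast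
  qed
qed

lemma sim_copy_bottom_edge:
  assumes "0 < r" "0 \<le> s" "s \<le> 2 * r"
  shows "q + s *\<^sub>R (cos t, sin t) \<in> sim_copy r t (q + r *\<^sub>R (cos t - sin t, sin t + cos t))"
proof -
  let ?v = "(s / r - 1, - 1 :: real)"
  have "?v \<in> std_square"
    using assms by (auto simp: std_square_def divide_le_eq)
  moreover have "q + s *\<^sub>R (cos t, sin t) = r *\<^sub>R rot t ?v + (q + r *\<^sub>R (cos t - sin t, sin t + cos t))"
    using assms(1) by (simp add: rot_def prod_eq_iff algebra_simps)
  ultimately show ?thesis
    unfolding sim_copy_def by blast
qed

lemma inner_sim_copy_bound:
  assumes "z \<in> sim_copy r t p" "0 \<le> r"
  shows "\<bar>w \<bullet> (z - p)\<bar> \<le> r * (\<bar>w \<bullet> rot t (1, 0)\<bar> + \<bar>w \<bullet> rot t (0, 1)\<bar>)"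
proof -
  obtain v where v: "v \<in> std_square" "z = r *\<^sub>R rot t v + p"
    using assms(1) unfolding sim_copy_def by blast
  have "rot t v = fst v *\<^sub>R rot t (1, 0) + snd v *\<^sub>R rot t (0, 1)"
    by (simp add: rot_def prod_eq_iff algebra_simps)
  then have "w \<bullet> (z - p) = r * (fst v * (w \<bullet> rot t (1, 0)) + snd v * (w \<bullet> rot t (0, 1)))"
    using v(2) by (simp add: inner_add_right algebra_simps)
  moreover have "\<bar>fst v\<bar> \<le> 1" "\<bar>snd v\<bar> \<le> 1"
    using v(1) by (auto simp: std_square_def)
  ultimately show ?thesis
    using assms(2) by (simp add: abs_mult mult_left_mono add_mono mult_left_le_one_le abs_triangle_ineq
        order_trans[OF abs_triangle_ineq])
qed

lemma interior_disjoint_halfplanes: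
  fixes w :: "'a::real_inner"
  assumes "w \<noteq> 0" "A \<subseteq> {z. w \<bullet> z \<le> c}" "B \<subseteq> {z. c \<le> w \<bullet> z}"
  shows "interior A \<inter> interior B = {}"
proof -
  have "interior A \<subseteq> {z. w \<bullet> z < c}" "interior B \<subseteq> {z. c < w \<bullet> z}"
    using interior_mono[OF assms(2)] interior_mono[OF assms(3)] assms(1) by auto
  then show ?thesis by fastforce
qed

lemma interior_disjoint_fst:
  "A \<subseteq> {z. fst z \<le> c} \<Longrightarrow> B \<subseteq> {z. c \<le> fst z} \<Longrightarrow> interior A \<inter> interior B = {}"
  for A B :: "(real \<times> real) set"
  using interior_disjoint_halfplanes[of "(1, 0)" A c B] by (simp add: inner_prod_def zero_prod_def)

lemma interior_disjoint_snd:
  "A \<subseteq> {z. snd z \<le> c} \<Longrightarrow> B \<subseteq> {z. c \<le> snd z} \<Longrightarrow> interior A \<inter> interior B = {}"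
  for A B :: "(real \<times> real) set"
  using interior_disjoint_halfplanes[of "(0, 1)" A c B] by (simp add: inner_prod_def zero_prod_def)

section \<open>The configuration\<close>

locale square_chain =
  fixes n :: nat and r :: "nat \<Rightarrow> real"
  assumes n_ge_5: "5 \<le> n"
    and radii_pos: "\<And>k. k < n \<Longrightarrow> 0 < r k"
    and radius_3_small: "2 * r 3 < r 2"
    and radius_1_large: "2 * r 2 \<le> r 1"
    and radius_0_large: "r 2 \<le> r 0"
    and stack_fits: "(\<Sum>k\<in>{4..<n}. r k) \<le> r 0"
begin

text \<open>The slope of the line through the corners \<open>(-2 r\<^sub>3, 2 r\<^sub>3)\<close> and \<open>(0, 2 r\<^sub>2)\<close>
  is \<open>(r\<^sub>2 - r\<^sub>3) / r\<^sub>3\<close>; the line meets the x-axis at \<open>corner\<close>.\<close>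

definition tilt :: real where
  "tilt = arctan ((r 2 - r 3) / r 3)"

definition corner :: real where
  "corner = - 2 * r 2 * cot tilt"

definition depth :: "nat \<Rightarrow> real" where
  "depth k = - 2 * (\<Sum>i\<in>{4..<k}. r i)"

definition angle :: "nat \<Rightarrow> real" where
  "angle k = (if k = 1 then tilt else 0)"

definition centre :: "nat \<Rightarrow> real \<times> real" where
  "centre k =
    (if k = 0 then (- r 0, - r 0)
     else if k = 1 then (corner, 0) + r 1 *\<^sub>R (cos tilt - sin tilt, sin tilt + cos tilt)
     else if k = 2 then (r 2, r 2)
     else if k = 3 then (- r 3, r 3)
     else (r k, depth k - r k))"

abbreviation sq :: "nat \<Rightarrow> (real \<times> real) set" where
  "sq k \<equiv> sim_copy (r k) (angle k) (centre k)"

lemma radii_0_to_4_pos: "0 < r 0" "0 < r 1" "0 < r 2" "0 < r 3" "0 < r 4"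
  using radii_pos n_ge_5 by auto

lemma tilt_bounds: "0 < tilt" "tilt < pi / 2"
proof -
  have "0 < (r 2 - r 3) / r 3"
    using radius_3_small radii_0_to_4_pos by simp
  then show "0 < tilt" "tilt < pi / 2"
    unfolding tilt_def using arctan_bounded arctan_less_zero_iff by (auto simp: arctan_zero_zero less_le)
qed

lemma sin_tilt_pos: "0 < sin tilt" and cos_tilt_pos: "0 < cos tilt"
  using tilt_bounds by (auto intro: sin_gt_zero cos_gt_zero)

lemma cot_tilt: "cot tilt = r 3 / (r 2 - r 3)"
proof -
  have "tan tilt = (r 2 - r 3) / r 3"
    by (simp add: tilt_def tan_arctan)
  moreover have "cot tilt = inverse (tan tilt)"
    by (simp add: cot_def tan_def)
  ultimately show ?thesis
    by simp
qed

lemma sin_tilt_ge_half: "1 / 2 \<le> sin tilt"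
proof -
  have "1 < tan tilt"
    using radius_3_small radii_0_to_4_pos by (simp add: tilt_def tan_arctan)
  then have "cos tilt < sin tilt"
    using cos_tilt_pos by (simp add: tan_def)
  then have "cos tilt ^ 2 < sin tilt ^ 2"
    using cos_tilt_pos by (simp add: power_strict_mono)
  moreover have "(1 / 2 :: real) ^ 2 = 1 / 4"
    by (simp add: power2_eq_square)
  ultimately have "(1 / 2) ^ 2 \<le> sin tilt ^ 2"
    using sin_cos_squared_add[of tilt] by linarith
  then show ?thesis
    using sin_tilt_pos power2_le_imp_le by fastforce
qed

lemma radii_nonneg: "k < n \<Longrightarrow> 0 \<le> r k"
  using radii_pos less_imp_le by blast

lemma depth_Suc: "4 \<le> k \<Longrightarrow> depth (Suc k) = depth k - 2 * r k"
  by (simp add: depth_def)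

lemma depth_antimono: "k \<le> l \<Longrightarrow> l \<le> n \<Longrightarrow> depth l \<le> depth k"
  unfolding depth_def by (simp, rule sum_mono2) (auto intro: radii_nonneg)

lemma depth_bounds: "k \<le> n \<Longrightarrow> - 2 * r 0 \<le> depth k \<and> depth k \<le> 0"
proof -
  assume "k \<le> n"
  have "(\<Sum>i\<in>{4..<k}. r i) \<le> (\<Sum>i\<in>{4..<n}. r i)"
    by (rule sum_mono2) (use \<open>k \<le> n\<close> in \<open>auto intro: radii_nonneg\<close>)
  moreover have "0 \<le> (\<Sum>i\<in>{4..<k}. r i)"
    by (rule sum_nonneg) (use \<open>k \<le> n\<close> in \<open>auto intro: radii_nonneg\<close>)
  ultimately show ?thesis
    using stack_fits by (simp add: depth_def)
qed

lemma sq_0: "sq 0 = {- 2 * r 0..0} \<times> {- 2 * r 0..0}"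
  using radii_0_to_4_pos by (simp add: angle_def centre_def sim_copy_rot0)

lemma sq_2: "sq 2 = {0..2 * r 2} \<times> {0..2 * r 2}"
  using radii_0_to_4_pos by (simp add: angle_def centre_def sim_copy_rot0)

lemma sq_3: "sq 3 = {- 2 * r 3..0} \<times> {0..2 * r 3}"
  using radii_0_to_4_pos by (simp add: angle_def centre_def sim_copy_rot0)

lemma sq_stack: "4 \<le> k \<Longrightarrow> k < n \<Longrightarrow> sq k = {0..2 * r k} \<times> {depth (Suc k)..depth k}"
  using radii_pos by (simp add: angle_def centre_def sim_copy_rot0 depth_Suc)

lemma corner_bounds: "- 2 * r 0 \<le> corner" "corner \<le> 0"
proof -
  have "2 * r 2 * cot tilt = 2 * r 2 * r 3 / (r 2 - r 3)"
    by (simp add: cot_tilt)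
  moreover have "2 * r 2 * r 3 / (r 2 - r 3) \<le> 2 * r 2"
    using radius_3_small radii_0_to_4_pos by (simp add: divide_le_eq)
  moreover have "0 \<le> 2 * r 2 * r 3 / (r 2 - r 3)"
    using radius_3_small radii_0_to_4_pos by simp
  ultimately show "- 2 * r 0 \<le> corner" "corner \<le> 0"
    using radius_0_large by (auto simp: corner_def)
qed

lemma tilted_bottom_edge: "0 \<le> h \<Longrightarrow> h \<le> 2 * r 2 \<Longrightarrow> (corner + h * cot tilt, h) \<in> sq 1"
proof -
  assume h: "0 \<le> h" "h \<le> 2 * r 2"
  have "r 1 \<le> 2 * r 1 * sin tilt"
    using mult_left_mono[OF sin_tilt_ge_half, of "2 * r 1"] radii_0_to_4_pos by simp
  then have "h \<le> 2 * r 1 * sin tilt"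
    using h radius_1_large by linarith
  then have "h / sin tilt \<le> 2 * r 1"
    using sin_tilt_pos by (simp add: divide_le_eq)
  then have "(corner, 0) + (h / sin tilt) *\<^sub>R (cos tilt, sin tilt) \<in> sq 1"
    unfolding angle_def centre_def
    using h radii_0_to_4_pos sin_tilt_pos by (simp del: scaleR_Pair add: sim_copy_bottom_edge)
  moreover have "(corner, 0) + (h / sin tilt) *\<^sub>R (cos tilt, sin tilt) = (corner + h * cot tilt, h)"
    using sin_tilt_pos by (simp add: cot_def)
  ultimately show ?thesis by simp
qed

lemma tilted_above_axis: "sq 1 \<subseteq> {z. 0 \<le> snd z}"
proof
  fix z assume "z \<in> sq 1"
  then have "\<bar>(0, 1) \<bullet> (z - centre 1)\<bar> \<le> r 1 * (sin tilt + cos tilt)"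
    using inner_sim_copy_bound[of z "r 1" "angle 1" "centre 1" "(0, 1)"] radii_0_to_4_pos
      sin_tilt_pos cos_tilt_pos by (simp add: angle_def rot_def inner_prod_def)
  then show "z \<in> {z. 0 \<le> snd z}"
    by (simp add: centre_def inner_prod_def algebra_simps)
qed

lemma tilted_beyond_line: "sq 1 \<subseteq> {z. 2 * r 2 * cos tilt \<le> (- sin tilt, cos tilt) \<bullet> z}"
proof
  fix z assume "z \<in> sq 1"
  then have bound: "\<bar>(- sin tilt, cos tilt) \<bullet> (z - centre 1)\<bar> \<le> r 1"
    using inner_sim_copy_bound[of z "r 1" "angle 1" "centre 1" "(- sin tilt, cos tilt)"] radii_0_to_4_pos
    by (simp add: angle_def rot_def inner_prod_def algebra_simps flip: power2_eq_square)
  have "(- sin tilt, cos tilt) \<bullet> (cos tilt - sin tilt, sin tilt + cos tilt) = 1"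
    unfolding inner_prod_def inner_real_def fst_conv snd_conv
    using sin_cos_squared_add[of tilt] by algebra
  moreover have "(- sin tilt, cos tilt) \<bullet> (corner, 0) = 2 * r 2 * cos tilt"
    using sin_tilt_pos by (simp add: corner_def cot_def inner_prod_def)
  ultimately have "(- sin tilt, cos tilt) \<bullet> centre 1 = r 1 + 2 * r 2 * cos tilt"
    by (simp del: scaleR_Pair add: centre_def inner_add_right)
  then show "z \<in> {z. 2 * r 2 * cos tilt \<le> (- sin tilt, cos tilt) \<bullet> z}"
    using bound by (simp add: inner_diff_right)
qed

lemma below_tilted_line: "k \<in> {2, 3} \<Longrightarrow> sq k \<subseteq> {z. (- sin tilt, cos tilt) \<bullet> z \<le> 2 * r 2 * cos tilt}"
proof -
  have box_below: "{x..x'} \<times> {y..y'} \<subseteq> {z. (- sin tilt, cos tilt) \<bullet> z \<le> - sin tilt * x + cos tilt * y'}"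
    for x x' y y' :: real
  proof
    fix z assume "z \<in> {x..x'} \<times> {y..y'}"
    then have "cos tilt * snd z \<le> cos tilt * y'" "sin tilt * x \<le> sin tilt * fst z"
      using sin_tilt_pos cos_tilt_pos by (auto intro: mult_left_mono)
    then show "z \<in> {z. (- sin tilt, cos tilt) \<bullet> z \<le> - sin tilt * x + cos tilt * y'}"
      by (simp add: inner_prod_def)
  qed
  have "cos tilt / sin tilt = r 3 / (r 2 - r 3)"
    using cot_tilt by (simp add: cot_def)
  moreover have "sin tilt \<noteq> 0" "r 2 - r 3 \<noteq> 0"
    using sin_tilt_pos radius_3_small radii_0_to_4_pos by auto
  ultimately have "cos tilt * (r 2 - r 3) = r 3 * sin tilt"
    by (simp add: frac_eq_eq)
  then have "- sin tilt * (- 2 * r 3) + cos tilt * (2 * r 3) = 2 * r 2 * cos tilt"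
    by (simp add: algebra_simps)
  moreover have "- sin tilt * 0 + cos tilt * (2 * r 2) = 2 * r 2 * cos tilt"
    by simp
  ultimately have "sq 2 \<subseteq> {z. (- sin tilt, cos tilt) \<bullet> z \<le> 2 * r 2 * cos tilt}"
    "sq 3 \<subseteq> {z. (- sin tilt, cos tilt) \<bullet> z \<le> 2 * r 2 * cos tilt}"
    using box_below[of 0 "2 * r 2" 0 "2 * r 2"] box_below[of "- 2 * r 3" 0 0 "2 * r 3"]
    unfolding sq_2 sq_3 by (simp_all add: mult_ac)
  then show "k \<in> {2, 3} \<Longrightarrow> ?thesis"
    by blast
qed

lemma upper_squares_above_axis: "k \<in> {1, 2, 3} \<Longrightarrow> sq k \<subseteq> {z. 0 \<le> snd z}"
  using tilted_above_axis by (auto simp: sq_2 sq_3)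

lemma lower_squares_below_axis: "k = 0 \<or> 4 \<le> k \<and> k < n \<Longrightarrow> sq k \<subseteq> {z. snd z \<le> 0}"
  using depth_bounds[of k] by (auto simp: sq_0 sq_stack)

lemma sq_interiors_disjoint:
  assumes "i < j" "j < n"
  shows "interior (sq i) \<inter> interior (sq j) = {}"
proof -
  have normal: "(- sin tilt, cos tilt) \<noteq> 0"
    using cos_tilt_pos by (simp add: zero_prod_def)
  consider "i = 0" "j \<in> {1, 2, 3}" | "i \<in> {1, 2, 3}" "4 \<le> j" | "i = 1" "j \<in> {2, 3}"
    | "i = 2" "j = 3" | "i = 0" "4 \<le> j" | "4 \<le> i"
    using assms(1) by fastforce
  then show ?thesis
  proof cases
    case 1
    then show ?thesis
      by (intro interior_disjoint_snd[of _ 0] lower_squares_below_axis upper_squares_above_axis) auto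
  next
    case 2
    then have "interior (sq j) \<inter> interior (sq i) = {}"
      using assms(2)
      by (intro interior_disjoint_snd[of _ 0] lower_squares_below_axis upper_squares_above_axis) auto
    then show ?thesis by blast
  next
    case 3
    then have "interior (sq j) \<inter> interior (sq 1) = {}"
      by (intro interior_disjoint_halfplanes[OF normal, of _ "2 * r 2 * cos tilt"]
          below_tilted_line tilted_beyond_line)
    then show ?thesis using 3 by blast
  next
    case 4
    have "interior (sq 3) \<inter> interior (sq 2) = {}"
      by (rule interior_disjoint_fst[of _ 0]) (auto simp: sq_2 sq_3)
    then show ?thesis using 4 by blast
  next
    case 5
    then show ?thesis
      using assms(2) by (intro interior_disjoint_fst[of _ 0]) (auto simp: sq_0 sq_stack)
  next
    case 6
    have "depth j \<le> depth (Suc i)"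
      using assms by (intro depth_antimono) auto
    then have "interior (sq j) \<inter> interior (sq i) = {}"
      using assms 6 by (intro interior_disjoint_snd[of _ "depth j"]) (auto simp: sq_stack)
    then show ?thesis by blast
  qed
qed

lemma is_packing: "is_packing n r angle centre"
  unfolding is_packing_def
proof (intro conjI allI impI)
  fix k assume "k < n"
  then show "0 < r k" by (rule radii_pos)
  show "0 \<le> angle k" "angle k < pi / 2"
    using tilt_bounds by (auto simp: angle_def)
next
  fix i j assume "i < n" "j < n" "i \<noteq> j"
  then show "interior (sq i) \<inter> interior (sq j) = {}"
    using sq_interiors_disjoint[of i j] sq_interiors_disjoint[of j i] by (cases "i < j") auto
qed

lemma contactI: "z \<in> sq i \<Longrightarrow> z \<in> sq j \<Longrightarrow> i < j \<Longrightarrow> j < n \<Longrightarrow> (i, j) \<in> contacts n r angle centre"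
  unfolding contacts_def by blast

lemma origin_in_sq: "k \<in> {0, 2, 3, 4} \<Longrightarrow> (0, 0) \<in> sq k"
  using radii_0_to_4_pos n_ge_5 depth_bounds[of 5]
  by (auto simp: sq_0 sq_2 sq_3 sq_stack depth_def)

lemma stack_corner_in_sq:
  assumes "4 \<le> k" "k < n"
  shows "(0, depth k) \<in> sq 0" "(0, depth k) \<in> sq k" "(0, depth (Suc k)) \<in> sq k"
  using assms depth_bounds[of k] radii_pos[of k] by (auto simp: sq_0 sq_stack depth_Suc)

lemma contacts_with_0: "1 \<le> k \<Longrightarrow> k < n \<Longrightarrow> (0, k) \<in> contacts n r angle centre"
proof -
  assume k: "1 \<le> k" "k < n"
  consider "k = 1" | "k \<in> {2, 3}" | "4 \<le> k"
    using k by fastforce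
  then show ?thesis
  proof cases
    case 1
    have "(corner, 0) \<in> sq 1"
      using tilted_bottom_edge[of 0] radii_0_to_4_pos by simp
    moreover have "(corner, 0) \<in> sq 0"
      using corner_bounds by (simp add: sq_0)
    ultimately show ?thesis
      using 1 k by (intro contactI[of "(corner, 0)"]) auto
  next
    case 2
    then show ?thesis
      using k by (intro contactI[of "(0, 0)"] origin_in_sq) auto
  next
    case 3
    then show ?thesis
      using k by (intro contactI[of "(0, depth k)"] stack_corner_in_sq) auto
  qed
qed

lemma contacts_consecutive: "2 \<le> k \<Longrightarrow> k < n \<Longrightarrow> (k - 1, k) \<in> contacts n r angle centre"
proof -
  assume k: "2 \<le> k" "k < n"
  consider "k = 2" | "k \<in> {3, 4}" | "5 \<le> k"
    using k by fastforce
  then show ?thesis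
  proof cases
    case 1
    have "(0, 2 * r 2) \<in> sq 1"
      using tilted_bottom_edge[of "2 * r 2"] radii_0_to_4_pos by (simp add: corner_def)
    moreover have "(0, 2 * r 2) \<in> sq 2"
      using radii_0_to_4_pos by (simp add: sq_2)
    ultimately show ?thesis
      using 1 k by (intro contactI[of "(0, 2 * r 2)"]) auto
  next
    case 2
    then show ?thesis
      using k by (intro contactI[of "(0, 0)"] origin_in_sq) auto
  next
    case 3
    then obtain m where "k = Suc m" "4 \<le> m"
      by (intro that[of "k - 1"]) auto
    moreover from this have "(0, depth (Suc m)) \<in> sq m" "(0, depth (Suc m)) \<in> sq (Suc m)"
      using k by (intro stack_corner_in_sq; simp)+
    ultimately show ?thesis
      using k by (auto intro: contactI)
  qed
qed

lemma contacts_extra: "(1, 3) \<in> contacts n r angle centre" "(2, 4) \<in> contacts n r angle centre"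
proof -
  have "corner + 2 * r 3 * cot tilt = - 2 * (r 2 - r 3) * cot tilt"
    by (simp add: corner_def algebra_simps)
  also have "\<dots> = - 2 * r 3"
    using radius_3_small radii_0_to_4_pos by (simp add: cot_tilt field_simps)
  finally have "corner + 2 * r 3 * cot tilt = - 2 * r 3" .
  then have "(- 2 * r 3, 2 * r 3) \<in> sq 1"
    using tilted_bottom_edge[of "2 * r 3"] radii_0_to_4_pos radius_3_small by simp
  moreover have "(- 2 * r 3, 2 * r 3) \<in> sq 3"
    using radii_0_to_4_pos by (simp add: sq_3)
  ultimately show "(1, 3) \<in> contacts n r angle centre"
    using n_ge_5 by (intro contactI) auto
  show "(2, 4) \<in> contacts n r angle centre"
    using n_ge_5 by (intro contactI[of "(0, 0)"] origin_in_sq) auto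
qed

lemma card_contacts: "2 * n - 2 < card (contacts n r angle centre)"
proof -
  define E where "E = (\<lambda>k. (0, k)) ` {1..<n} \<union> (\<lambda>k. (k - 1, k)) ` {2..<n} \<union> {(1, 3), (2, 4)}"
  have "E \<subseteq> contacts n r angle centre"
    using contacts_with_0 contacts_consecutive contacts_extra by (auto simp: E_def)
  moreover have "finite (contacts n r angle centre)"
    by (rule finite_subset[of _ "{..<n} \<times> {..<n}"]) (auto simp: contacts_def)
  ultimately have "card E \<le> card (contacts n r angle centre)"
    by (rule card_mono[rotated])
  moreover have "card E = (n - 1) + (n - 2) + 2"
    unfolding E_def
    by (subst card_Un_disjoint card_image; auto simp: inj_on_def)+
  ultimately show ?thesis
    using n_ge_5 by linarith
qed

end

theorem proposition22:
  fixes n :: nat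
  assumes "n \<ge> 5"
  shows "\<exists>r t p. is_packing n r t p \<and> alg_indep n r \<and> card (contacts n r t p) > 2 * n - 2"
proof -
  define lo :: "nat \<Rightarrow> real"
    where "lo k = (if k = 0 then 2 * real n else if k = 1 then 10 else if k = 2 then 4 else 1)" for k
  obtain r where r: "\<forall>k<n. lo k < r k \<and> r k < lo k + 1" and indep: "alg_indep n r"
    using alg_indep_in_intervals[of n lo "\<lambda>k. lo k + 1"] by auto
  have bounds: "2 * real n < r 0" "10 < r 1" "4 < r 2" "r 2 < 5" "1 < r 3" "r 3 < 2"
    using r[rule_format, of 0] r[rule_format, of 1] r[rule_format, of 2] r[rule_format, of 3] assms
    by (simp_all add: lo_def)
  have "1 \<le> lo k" for k
    using assms by (simp add: lo_def)
  then have pos: "0 < r k" if "k < n" for k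
    using r that by (meson less_le_trans zero_less_one order_less_trans)
  have "(\<Sum>k\<in>{4..<n}. r k) \<le> (\<Sum>k\<in>{4..<n}. 2)"
    using r by (intro sum_mono) (auto simp: lo_def)
  also have "\<dots> \<le> r 0"
    using bounds assms by simp
  finally interpret square_chain n r
    using bounds pos assms by unfold_locales auto
  show ?thesis
    using is_packing card_contacts indep by blast
qed

end
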